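(* For every real $\theta\geq 0$, $K_0(A(\mathbb{R}^2_\theta))=K_0(\mathbb{C})\cong\mathbb{Z}$.
   Context: $A(\mathbb{R}^2_\theta)$ is the unital $*$-algebra generated by two self-adjoint elements $x,y$ with $[x,y]=xy-yx=-i\theta$, elements being finite sums $\sum a_{p,q}x^py^q$ with linearly independent ordered monomials. A projector over a $*$-algebra $A$ is a square matrix $p$ over $A$ with $p^2=p=p^*$; projectors $p,q$ are equivalent if $\mathrm{diag}(p,0)=u\,\mathrm{diag}(q,0)\,u^*$ for some unitary matrix $u$ over $A$ of suitable size; $K_0(A)$ is the Grothendieck group of the semigroup of equivalence classes under $p+q:=\mathrm{diag}(p,q)$. *)

theory Defs
  imports Complex_Main "HOL-Algebra.Elementary_Groups"
begin

record 'a salg =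
  sa_carrier :: "'a set"
  sa_zero :: 'a
  sa_one :: 'a
  sa_add :: "'a \<Rightarrow> 'a \<Rightarrow> 'a"
  sa_mul :: "'a \<Rightarrow> 'a \<Rightarrow> 'a"
  sa_star :: "'a \<Rightarrow> 'a"

definition complex_salg :: "complex salg" where
  "complex_salg = \<lparr>sa_carrier = UNIV, sa_zero = 0, sa_one = 1, sa_add = (+),
     sa_mul = (*), sa_star = cnj\<rparr>"

text \<open>The algebra A(R^2_theta): an element \<open>f\<close> stands for the finite sum
  \<open>\<Sum> f(p,q) x^p y^q\<close> over ordered monomials.  Products and adjoints are
  reordered using \<open>y x = x y + i theta\<close> (i.e. \<open>[x,y] = -i theta\<close>):
  \<open>y^q x^r = \<Sum>_k C(q,k) C(r,k) k! (i theta)^k x^(r-k) y^(q-k)\<close>.\<close>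

definition supp2 :: "(nat \<times> nat \<Rightarrow> complex) \<Rightarrow> (nat \<times> nat) set" where
  "supp2 f = {m. f m \<noteq> 0}"

definition moyal_mul :: "real \<Rightarrow> (nat \<times> nat \<Rightarrow> complex) \<Rightarrow> (nat \<times> nat \<Rightarrow> complex) \<Rightarrow> (nat \<times> nat \<Rightarrow> complex)" where
  "moyal_mul \<theta> f g = (\<lambda>(a, b).
     \<Sum>(p, q)\<in>supp2 f. \<Sum>(r, s)\<in>supp2 g. \<Sum>k\<in>{..min q r}.
       (if p + r - k = a \<and> q + s - k = b
        then f (p, q) * g (r, s) * of_nat (q choose k) * of_nat (r choose k) * of_nat (fact k)
             * (\<i> * of_real \<theta>) ^ k
        else 0))"

definition moyal_star :: "real \<Rightarrow> (nat \<times> nat \<Rightarrow> complex) \<Rightarrow> (nat \<times> nat \<Rightarrow> complex)" where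
  "moyal_star \<theta> f = (\<lambda>(a, b).
     \<Sum>(p, q)\<in>supp2 f. \<Sum>k\<in>{..min p q}.
       (if p - k = a \<and> q - k = b
        then cnj (f (p, q)) * of_nat (q choose k) * of_nat (p choose k) * of_nat (fact k)
             * (\<i> * of_real \<theta>) ^ k
        else 0))"

definition A_theta :: "real \<Rightarrow> (nat \<times> nat \<Rightarrow> complex) salg" where
  "A_theta \<theta> = \<lparr>sa_carrier = {f. finite (supp2 f)},
     sa_zero = (\<lambda>_. 0),
     sa_one = (\<lambda>m. if m = (0, 0) then 1 else 0),
     sa_add = (\<lambda>f g m. f m + g m),
     sa_mul = moyal_mul \<theta>,
     sa_star = moyal_star \<theta>\<rparr>"

definition scalar_incl :: "complex \<Rightarrow> (nat \<times> nat \<Rightarrow> complex)" where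
  "scalar_incl c = (\<lambda>m. if m = (0, 0) then c else 0)"

text \<open>A matrix of size \<open>n\<close> is a function \<open>nat \<Rightarrow> nat \<Rightarrow> 'a\<close> with entries in the
  carrier in the range \<open>i, j < n\<close> and zero elsewhere.  Thus padding by zeros
  (\<open>diag(p,0)\<close>) does not change the representing function.\<close>

type_synonym 'a mat = "nat \<Rightarrow> nat \<Rightarrow> 'a"

definition mat_in :: "'a salg \<Rightarrow> nat \<Rightarrow> 'a mat \<Rightarrow> bool" where
  "mat_in A n M \<longleftrightarrow> (\<forall>i j. i < n \<and> j < n \<longrightarrow> M i j \<in> sa_carrier A)
     \<and> (\<forall>i j. \<not> (i < n \<and> j < n) \<longrightarrow> M i j = sa_zero A)"

definition asum :: "'a salg \<Rightarrow> 'a list \<Rightarrow> 'a" where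
  "asum A xs = foldr (sa_add A) xs (sa_zero A)"

definition mmul :: "'a salg \<Rightarrow> nat \<Rightarrow> 'a mat \<Rightarrow> 'a mat \<Rightarrow> 'a mat" where
  "mmul A n M N = (\<lambda>i j. if i < n \<and> j < n
      then asum A (map (\<lambda>k. sa_mul A (M i k) (N k j)) [0..<n]) else sa_zero A)"

definition mstar :: "'a salg \<Rightarrow> nat \<Rightarrow> 'a mat \<Rightarrow> 'a mat" where
  "mstar A n M = (\<lambda>i j. if i < n \<and> j < n then sa_star A (M j i) else sa_zero A)"

definition mid :: "'a salg \<Rightarrow> nat \<Rightarrow> 'a mat" where
  "mid A n = (\<lambda>i j. if i = j \<and> i < n then sa_one A else sa_zero A)"

definition unitary :: "'a salg \<Rightarrow> nat \<Rightarrow> 'a mat \<Rightarrow> bool" where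
  "unitary A n u \<longleftrightarrow> mat_in A n u \<and> mmul A n u (mstar A n u) = mid A n
     \<and> mmul A n (mstar A n u) u = mid A n"

definition projector :: "'a salg \<Rightarrow> nat \<times> 'a mat \<Rightarrow> bool" where
  "projector A P \<longleftrightarrow> (case P of (n, p) \<Rightarrow>
     mat_in A n p \<and> mmul A n p p = p \<and> mstar A n p = p)"

text \<open>\<open>p \<sim> q\<close> iff \<open>diag(p,0) = u diag(q,0) u*\<close> for a unitary \<open>u\<close> of a suitable size.\<close>
definition proj_equiv :: "'a salg \<Rightarrow> nat \<times> 'a mat \<Rightarrow> nat \<times> 'a mat \<Rightarrow> bool" where
  "proj_equiv A P Q \<longleftrightarrow> projector A P \<and> projector A Q \<and>
     (\<exists>N u. fst P \<le> N \<and> fst Q \<le> N \<and> unitary A N u \<and>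
        snd P = mmul A N (mmul A N u (snd Q)) (mstar A N u))"

definition dsum :: "'a salg \<Rightarrow> nat \<times> 'a mat \<Rightarrow> nat \<times> 'a mat \<Rightarrow> nat \<times> 'a mat" where
  "dsum A P Q = (case P of (n, p) \<Rightarrow> case Q of (m, q) \<Rightarrow>
     (n + m, \<lambda>i j. if i < n \<and> j < n then p i j
                   else if n \<le> i \<and> n \<le> j \<and> i < n + m \<and> j < n + m then q (i - n) (j - n)
                   else sa_zero A))"

definition zero_proj :: "'a salg \<Rightarrow> nat \<times> 'a mat" where
  "zero_proj A = (0, \<lambda>i j. sa_zero A)"

text \<open>Formal differences \<open>[a] - [b]\<close>: \<open>(a,b) ~ (c,d)\<close> iff
  \<open>[a]+[d]+[e] = [c]+[b]+[e]\<close> in the semigroup of classes, for some \<open>e\<close>.\<close>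
definition grel :: "'a salg \<Rightarrow> ((nat \<times> 'a mat) \<times> (nat \<times> 'a mat)) rel" where
  "grel A = {((a, b), (c, d)). projector A a \<and> projector A b \<and> projector A c \<and> projector A d \<and>
     (\<exists>e. projector A e \<and> proj_equiv A (dsum A (dsum A a d) e) (dsum A (dsum A c b) e))}"

definition K0 :: "'a salg \<Rightarrow> ((nat \<times> 'a mat) \<times> (nat \<times> 'a mat)) set monoid" where
  "K0 A = \<lparr>carrier = {grel A `` {(a, b)} | a b. projector A a \<and> projector A b},
     monoid.mult = (\<lambda>X Y. \<Union>x\<in>X. \<Union>y\<in>Y.
        grel A `` {(dsum A (fst x) (fst y), dsum A (snd x) (snd y))}),
     one = grel A `` {(zero_proj A, zero_proj A)}\<rparr>"

definition K0_map :: "'b salg \<Rightarrow> ('a \<Rightarrow> 'b)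
    \<Rightarrow> ((nat \<times> 'a mat) \<times> (nat \<times> 'a mat)) set \<Rightarrow> ((nat \<times> 'b mat) \<times> (nat \<times> 'b mat)) set" where
  "K0_map B \<phi> X = (\<Union>x\<in>X. grel B ``
     {((fst (fst x), \<lambda>i j. \<phi> (snd (fst x) i j)), (fst (snd x), \<lambda>i j. \<phi> (snd (snd x) i j)))})"

end

theory Submission
  imports Defs
begin

(* Order the monomials x^p y^q of A(R^2_theta) by total degree and then by the degree in x.
   The leading monomial of a product is the product of the leading monomials and the adjoint
   preserves leading terms, so if x^a y^b is the largest monomial occurring in the entries of a
   matrix P, then for a suitable row i the coefficient of x^(2a) y^(2b) in the (i, i) entry of
   P P^* is the sum over k of |coefficient of x^a y^b in P_ik|^2 > 0.  For a projector, P P^* = P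
   only involves monomials up to x^a y^b; for a unitary, P P^* = 1.  Either way a = b = 0, so
   projectors and unitaries over A(R^2_theta) are scalar matrices and the inclusion of C induces
   an isomorphism on K_0.  Over C every projection is unitarily conjugate to a diagonal one
   (by Householder reflections), so projections are classified up to unitary equivalence by
   their rank, and K_0(C) = Z via [p] - [q] |-> rank p - rank q. *)

section \<open>K_0 of an algebra whose projectors are classified by a rank\<close>

locale K0_rank =
  fixes A :: "'a salg" and rank :: "nat \<times> 'a mat \<Rightarrow> nat"
  assumes proj_equiv_iff_rank:
      "proj_equiv A P Q \<longleftrightarrow> projector A P \<and> projector A Q \<and> rank P = rank Q"
    and projector_dsum: "projector A P \<Longrightarrow> projector A Q \<Longrightarrow> projector A (dsum A P Q)"
    and rank_dsum: "projector A P \<Longrightarrow> projector A Q \<Longrightarrow> rank (dsum A P Q) = rank P + rank Q"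
    and projector_zero_proj: "projector A (zero_proj A)"
    and rank_zero_proj: "rank (zero_proj A) = 0"
    and rank_surj: "\<exists>P. projector A P \<and> rank P = r"
begin

definition proj_pairs :: "((nat \<times> 'a mat) \<times> (nat \<times> 'a mat)) set" where
  "proj_pairs = {x. projector A (fst x) \<and> projector A (snd x)}"

definition index :: "(nat \<times> 'a mat) \<times> (nat \<times> 'a mat) \<Rightarrow> int" where
  "index x = int (rank (fst x)) - int (rank (snd x))"

definition K0_class :: "int \<Rightarrow> ((nat \<times> 'a mat) \<times> (nat \<times> 'a mat)) set" where
  "K0_class k = {x \<in> proj_pairs. index x = k}"

lemma grel_iff_index: "(x, y) \<in> grel A \<longleftrightarrow> x \<in> proj_pairs \<and> y \<in> proj_pairs \<and> index x = index y"
proof -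
  obtain a b c d where xy: "x = (a, b)" "y = (c, d)"
    by (cases x, cases y)
  have "(\<exists>e. projector A e \<and> proj_equiv A (dsum A (dsum A a d) e) (dsum A (dsum A c b) e))
      \<longleftrightarrow> rank a + rank d = rank c + rank b"
    if abcd: "projector A a" "projector A b" "projector A c" "projector A d"
  proof
    assume "\<exists>e. projector A e \<and> proj_equiv A (dsum A (dsum A a d) e) (dsum A (dsum A c b) e)"
    then show "rank a + rank d = rank c + rank b"
      using abcd by (auto simp: proj_equiv_iff_rank projector_dsum rank_dsum)
  next
    assume "rank a + rank d = rank c + rank b"
    then show "\<exists>e. projector A e \<and> proj_equiv A (dsum A (dsum A a d) e) (dsum A (dsum A c b) e)"
      using abcd projector_zero_proj
      by (intro exI[of _ "zero_proj A"]) (simp add: proj_equiv_iff_rank projector_dsum rank_dsum)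
  qed
  then show ?thesis
    unfolding grel_def xy proj_pairs_def index_def by auto
qed

lemma grel_Image: "x \<in> proj_pairs \<Longrightarrow> grel A `` {x} = K0_class (index x)"
  by (auto simp: K0_class_def grel_iff_index)

lemma K0_class_nonempty: "K0_class k \<noteq> {}"
proof -
  obtain P where P: "projector A P" "rank P = nat \<bar>k\<bar>"
    using rank_surj by blast
  let ?x = "if k \<ge> 0 then (P, zero_proj A) else (zero_proj A, P)"
  have "?x \<in> K0_class k"
    using P projector_zero_proj rank_zero_proj by (simp add: K0_class_def proj_pairs_def index_def)
  then show ?thesis
    by blast
qed

lemma K0_class_inj: "K0_class k = K0_class l \<Longrightarrow> k = l"
  using K0_class_nonempty[of k] by (auto simp: K0_class_def)

lemma carrier_K0: "carrier (K0 A) = range K0_class"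
proof -
  have "carrier (K0 A) = (\<lambda>x. grel A `` {x}) ` proj_pairs"
    by (auto simp: K0_def proj_pairs_def; blast)
  also have "\<dots> = K0_class ` index ` proj_pairs"
    by (auto simp: grel_Image image_image)
  also have "index ` proj_pairs = UNIV"
  proof -
    have "k \<in> index ` proj_pairs" for k
      using K0_class_nonempty[of k] by (auto simp: K0_class_def)
    then show ?thesis
      by auto
  qed
  finally show ?thesis .
qed

lemma K0_mult_class: "K0_class k \<otimes>\<^bsub>K0 A\<^esub> K0_class l = K0_class (k + l)"
proof -
  have "grel A `` {(dsum A (fst x) (fst y), dsum A (snd x) (snd y))} = K0_class (k + l)"
    if "x \<in> K0_class k" "y \<in> K0_class l" for x y
    using that by (subst grel_Image)
      (auto simp: K0_class_def proj_pairs_def index_def projector_dsum rank_dsum)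
  then show ?thesis
    using K0_class_nonempty by (auto simp: K0_def)
qed

lemma one_K0: "\<one>\<^bsub>K0 A\<^esub> = K0_class 0"
  using grel_Image[of "(zero_proj A, zero_proj A)"] projector_zero_proj
  by (simp add: K0_def proj_pairs_def index_def)

lemma group_K0: "group (K0 A)"
proof (rule groupI)
  show "\<one>\<^bsub>K0 A\<^esub> \<in> carrier (K0 A)"
    by (simp add: carrier_K0 one_K0)
next
  fix x
  assume "x \<in> carrier (K0 A)"
  then obtain k where "x = K0_class k"
    by (auto simp: carrier_K0)
  then show "\<exists>y\<in>carrier (K0 A). y \<otimes>\<^bsub>K0 A\<^esub> x = \<one>\<^bsub>K0 A\<^esub>"
    by (intro bexI[of _ "K0_class (- k)"]) (auto simp: carrier_K0 K0_mult_class one_K0)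
qed (auto simp: carrier_K0 K0_mult_class one_K0 add.assoc)

lemma K0_class_iso: "K0_class \<in> iso integer_group (K0 A)"
proof (rule isoI)
  show "K0_class \<in> hom integer_group (K0 A)"
    by (rule homI) (auto simp: carrier_K0 K0_mult_class integer_group_def)
  show "bij_betw K0_class (carrier integer_group) (carrier (K0 A))"
    by (auto simp: bij_betw_def inj_on_def carrier_K0 dest: K0_class_inj)
qed

lemma K0_iso_integer_group: "K0 A \<cong> integer_group"
  using group.iso_sym[OF group_integer_group is_isoI[OF K0_class_iso]] .

end

lemma K0_map_iso:
  assumes A: "K0_rank A rank\<^sub>A" and B: "K0_rank B rank\<^sub>B"
    and classes: "\<And>k. K0_map B \<phi> (K0_rank.K0_class A rank\<^sub>A k) = K0_rank.K0_class B rank\<^sub>B k"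
  shows "K0_map B \<phi> \<in> iso (K0 A) (K0 B)"
proof (rule isoI)
  show "K0_map B \<phi> \<in> hom (K0 A) (K0 B)"
    by (rule homI) (auto simp: K0_rank.carrier_K0[OF A] K0_rank.carrier_K0[OF B]
        K0_rank.K0_mult_class[OF A] K0_rank.K0_mult_class[OF B] classes)
  show "bij_betw (K0_map B \<phi>) (carrier (K0 A)) (carrier (K0 B))"
    by (auto simp: bij_betw_def inj_on_def K0_rank.carrier_K0[OF A] K0_rank.carrier_K0[OF B]
        classes dest: K0_rank.K0_class_inj[OF B]) (metis classes rangeI image_eqI)
qed

definition cmat :: "nat \<Rightarrow> complex mat \<Rightarrow> bool" where
  "cmat n A \<longleftrightarrow> (\<forall>i j. \<not> (i < n \<and> j < n) \<longrightarrow> A i j = 0)"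

definition cmat_mult :: "nat \<Rightarrow> complex mat \<Rightarrow> complex mat \<Rightarrow> complex mat" where
  "cmat_mult n A B = (\<lambda>i j. if i < n \<and> j < n then (\<Sum>k<n. A i k * B k j) else 0)"

definition cmat_adj :: "nat \<Rightarrow> complex mat \<Rightarrow> complex mat" where
  "cmat_adj n A = (\<lambda>i j. if i < n \<and> j < n then cnj (A j i) else 0)"

definition cmat_one :: "nat \<Rightarrow> complex mat" where
  "cmat_one n = (\<lambda>i j. if i = j \<and> i < n then 1 else 0)"

definition cmat_trace :: "nat \<Rightarrow> complex mat \<Rightarrow> complex" where
  "cmat_trace n A = (\<Sum>i<n. A i i)"

definition cmat_unitary :: "nat \<Rightarrow> complex mat \<Rightarrow> bool" where
  "cmat_unitary n U \<longleftrightarrow> cmat n U \<and> cmat_mult n U (cmat_adj n U) = cmat_one n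
     \<and> cmat_mult n (cmat_adj n U) U = cmat_one n"

definition cmat_proj :: "nat \<Rightarrow> complex mat \<Rightarrow> bool" where
  "cmat_proj n p \<longleftrightarrow> cmat n p \<and> cmat_mult n p p = p \<and> cmat_adj n p = p"

definition cmat_conj :: "nat \<Rightarrow> complex mat \<Rightarrow> complex mat \<Rightarrow> complex mat" where
  "cmat_conj n U p = cmat_mult n (cmat_mult n U p) (cmat_adj n U)"

lemma cmat_cmat_mult [simp]: "cmat n (cmat_mult n A B)"
  by (simp add: cmat_def cmat_mult_def)

lemma cmat_cmat_adj [simp]: "cmat n (cmat_adj n A)"
  by (simp add: cmat_def cmat_adj_def)

lemma cmat_cmat_one [simp]: "cmat n (cmat_one n)"
  by (simp add: cmat_def cmat_one_def)

lemma cmat_mult_assoc: "cmat_mult n (cmat_mult n A B) C = cmat_mult n A (cmat_mult n B C)"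
  unfolding cmat_mult_def
  by (auto intro!: ext sum.swap simp: sum_distrib_left sum_distrib_right mult.assoc)

lemma cmat_adj_mult: "cmat_adj n (cmat_mult n A B) = cmat_mult n (cmat_adj n B) (cmat_adj n A)"
  unfolding cmat_adj_def cmat_mult_def by (auto intro!: ext simp: mult.commute)

lemma cmat_adj_adj: "cmat n A \<Longrightarrow> cmat_adj n (cmat_adj n A) = A"
  unfolding cmat_adj_def cmat_def by (auto intro!: ext)

lemma cmat_adj_one [simp]: "cmat_adj n (cmat_one n) = cmat_one n"
  unfolding cmat_adj_def cmat_one_def by (auto intro!: ext)

lemma cmat_mult_one_left: "cmat n A \<Longrightarrow> cmat_mult n (cmat_one n) A = A"
  unfolding cmat_mult_def cmat_one_def cmat_def
  by (auto intro!: ext simp: if_distrib[of "\<lambda>x. x * _"] sum.delta cong: if_cong)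

lemma cmat_mult_one_right: "cmat n A \<Longrightarrow> cmat_mult n A (cmat_one n) = A"
  unfolding cmat_mult_def cmat_one_def cmat_def
  by (auto intro!: ext simp: if_distrib[of "\<lambda>x. _ * x"] sum.delta' cong: if_cong)

lemma cmat_trace_mult_commute: "cmat_trace n (cmat_mult n A B) = cmat_trace n (cmat_mult n B A)"
  unfolding cmat_trace_def cmat_mult_def by (simp add: mult.commute) (rule sum.swap)

lemma cmat_unitary_one: "cmat_unitary n (cmat_one n)"
  by (simp add: cmat_unitary_def cmat_mult_one_left)

lemma cmat_unitary_adj: "cmat_unitary n U \<Longrightarrow> cmat_unitary n (cmat_adj n U)"
  by (simp add: cmat_unitary_def cmat_adj_adj)

lemma cmat_unitary_mult:
  assumes "cmat_unitary n U" "cmat_unitary n V"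
  shows "cmat_unitary n (cmat_mult n U V)"
proof -
  have "cmat_mult n (cmat_mult n U V) (cmat_adj n (cmat_mult n U V))
      = cmat_mult n U (cmat_mult n (cmat_mult n V (cmat_adj n V)) (cmat_adj n U))"
    by (simp add: cmat_adj_mult cmat_mult_assoc)
  moreover have "cmat_mult n (cmat_adj n (cmat_mult n U V)) (cmat_mult n U V)
      = cmat_mult n (cmat_adj n V) (cmat_mult n (cmat_mult n (cmat_adj n U) U) V)"
    by (simp add: cmat_adj_mult cmat_mult_assoc)
  ultimately show ?thesis
    using assms by (simp add: cmat_unitary_def cmat_mult_one_left)
qed

lemma cmat_conj_mult:
  "cmat_conj n (cmat_mult n U V) p = cmat_conj n U (cmat_conj n V p)"
  by (simp add: cmat_conj_def cmat_adj_mult cmat_mult_assoc)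

lemma cmat_conj_adj_cancel:
  assumes "cmat_unitary n U" "cmat n p"
  shows "cmat_conj n (cmat_adj n U) (cmat_conj n U p) = p"
proof -
  have "cmat n U"
    using assms(1) by (simp add: cmat_unitary_def)
  then have "cmat_conj n (cmat_adj n U) (cmat_conj n U p)
      = cmat_mult n (cmat_mult n (cmat_mult n (cmat_adj n U) U) p) (cmat_mult n (cmat_adj n U) U)"
    by (simp add: cmat_conj_def cmat_adj_adj cmat_mult_assoc)
  also have "\<dots> = p"
    using assms by (simp add: cmat_unitary_def cmat_mult_one_left cmat_mult_one_right)
  finally show ?thesis .
qed

lemma cmat_trace_conj:
  assumes "cmat_unitary n U" "cmat n p"
  shows "cmat_trace n (cmat_conj n U p) = cmat_trace n p"
proof -
  have "cmat_trace n (cmat_conj n U p) = cmat_trace n (cmat_mult n (cmat_adj n U) (cmat_mult n U p))"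
    unfolding cmat_conj_def by (rule cmat_trace_mult_commute)
  also have "\<dots> = cmat_trace n (cmat_mult n (cmat_mult n (cmat_adj n U) U) p)"
    by (simp add: cmat_mult_assoc)
  finally show ?thesis
    using assms by (simp add: cmat_unitary_def cmat_mult_one_left)
qed

lemma cmat_proj_conj:
  assumes U: "cmat_unitary n U" and p: "cmat_proj n p"
  shows "cmat_proj n (cmat_conj n U p)"
proof -
  have "cmat_mult n (cmat_conj n U p) (cmat_conj n U p)
      = cmat_conj n U (cmat_mult n p (cmat_mult n (cmat_mult n (cmat_adj n U) U) p))"
    by (simp add: cmat_conj_def cmat_mult_assoc)
  moreover have "cmat_adj n (cmat_conj n U p) = cmat_conj n U (cmat_adj n p)"
    using U by (simp add: cmat_conj_def cmat_adj_mult cmat_adj_adj cmat_unitary_def cmat_mult_assoc)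
  ultimately show ?thesis
    using U p by (simp add: cmat_proj_def cmat_unitary_def cmat_mult_one_left cmat_conj_def)
qed

lemma cmat_mono: "cmat n A \<Longrightarrow> n \<le> N \<Longrightarrow> cmat N A"
  by (auto simp: cmat_def)

lemma cmat_mult_resize:
  assumes "cmat n A" "cmat n B" "n \<le> N"
  shows "cmat_mult N A B = cmat_mult n A B"
proof (intro ext)
  fix i j
  have "(\<Sum>k<N. A i k * B k j) = (\<Sum>k<n. A i k * B k j)"
    using assms by (intro sum.mono_neutral_right) (auto simp: cmat_def)
  then show "cmat_mult N A B i j = cmat_mult n A B i j"
    using assms by (auto simp: cmat_mult_def cmat_def intro!: sum.neutral)
qed

lemma cmat_adj_resize: "cmat n A \<Longrightarrow> n \<le> N \<Longrightarrow> cmat_adj N A = cmat_adj n A"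
  by (auto simp: cmat_adj_def cmat_def intro!: ext)

lemma cmat_trace_resize: "cmat n A \<Longrightarrow> n \<le> N \<Longrightarrow> cmat_trace N A = cmat_trace n A"
  unfolding cmat_trace_def by (intro sum.mono_neutral_right) (auto simp: cmat_def)

lemma cmat_proj_mono: "cmat_proj n p \<Longrightarrow> n \<le> N \<Longrightarrow> cmat_proj N p"
  unfolding cmat_proj_def using cmat_mono cmat_mult_resize cmat_adj_resize by metis

lemma asum_complex_salg: "asum complex_salg xs = sum_list xs"
  by (induction xs) (auto simp: asum_def complex_salg_def)

lemma mmul_complex_salg: "mmul complex_salg n A B = cmat_mult n A B"
  unfolding mmul_def asum_complex_salg
  by (auto intro!: ext simp: cmat_mult_def complex_salg_def interv_sum_list_conv_sum_set_nat
      atLeast0LessThan)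

lemma mstar_complex_salg: "mstar complex_salg n A = cmat_adj n A"
  by (auto intro!: ext simp: mstar_def cmat_adj_def complex_salg_def)

lemma mid_complex_salg: "mid complex_salg n = cmat_one n"
  by (auto intro!: ext simp: mid_def cmat_one_def complex_salg_def)

lemma mat_in_complex_salg: "mat_in complex_salg n A \<longleftrightarrow> cmat n A"
  by (auto simp: mat_in_def cmat_def complex_salg_def)

lemma unitary_complex_salg: "unitary complex_salg n U \<longleftrightarrow> cmat_unitary n U"
  by (simp add: unitary_def cmat_unitary_def mmul_complex_salg mstar_complex_salg
      mid_complex_salg mat_in_complex_salg)

lemma projector_complex_salg: "projector complex_salg P \<longleftrightarrow> cmat_proj (fst P) (snd P)"
  by (simp add: projector_def cmat_proj_def mmul_complex_salg mstar_complex_salg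
      mat_in_complex_salg split_beta)

section \<open>Unitary diagonalisation of projections\<close>

text \<open>For a unit vector \<open>v\<close> with \<open>v m\<close> real this is the reflection \<open>I - 2 w w*/\<parallel>w\<parallel>\<^sup>2\<close>
  along \<open>w = e\<^sub>m - v\<close> (note \<open>\<parallel>w\<parallel>\<^sup>2 = 2 (1 - v m)\<close>); it exchanges \<open>e\<^sub>m\<close> and \<open>v\<close>.
  For \<open>v = e\<^sub>m\<close> the division by zero makes it the identity.\<close>
definition householder :: "nat \<Rightarrow> nat \<Rightarrow> (nat \<Rightarrow> complex) \<Rightarrow> complex mat" where
  "householder n m v = (\<lambda>i j. if i < n \<and> j < n
     then of_bool (i = j) - (of_bool (i = m) - v i) * cnj (of_bool (j = m) - v j) / (1 - v m)
     else 0)"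

lemma sum_cnj_mult_self: "(\<Sum>k\<in>K. z k * cnj (z k)) = of_real (\<Sum>k\<in>K. (cmod (z k))\<^sup>2)"
  by (simp only: of_real_sum complex_norm_square)

lemma householder_vector_norm:
  assumes "m < (n::nat)" "(\<Sum>k<n. (cmod (v k))\<^sup>2) = 1" "v m \<in> \<real>"
  shows "(\<Sum>k<n. (of_bool (k = m) - v k) * cnj (of_bool (k = m) - v k)) = 2 * (1 - v m)"
proof -
  have "(\<Sum>k<n. (of_bool (k = m) - v k) * cnj (of_bool (k = m) - v k))
      = (\<Sum>k<n. (if k = m then 1 - cnj (v m) - v m else 0) + v k * cnj (v k))"
    by (intro sum.cong refl) (auto simp: algebra_simps)
  also have "\<dots> = (\<Sum>k<n. if k = m then 1 - cnj (v m) - v m else 0) + (\<Sum>k<n. v k * cnj (v k))"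
    by (rule sum.distrib)
  also have "\<dots> = 1 - cnj (v m) - v m + 1"
    using assms(1,2) by (simp only: sum_cnj_mult_self) simp
  also have "\<dots> = 2 * (1 - v m)"
    using assms(3) by (simp add: Reals_cnj_iff)
  finally show ?thesis .
qed

lemma unit_vector_eq_basis_vector:
  assumes "m < (n::nat)" "(\<Sum>k<n. (cmod (v k))\<^sup>2) = 1" "v m = 1" "i < n"
  shows "v i = of_bool (i = m)"
proof -
  have "(\<Sum>k<n. (of_bool (k = m) - v k) * cnj (of_bool (k = m) - v k)) = 0"
    using householder_vector_norm[OF assms(1,2)] assms(3) by simp
  then have "of_real (\<Sum>k<n. (cmod (of_bool (k = m) - v k))\<^sup>2) = (0 :: complex)"
    by (simp only: sum_cnj_mult_self)
  then have "(\<Sum>k<n. (cmod (of_bool (k = m) - v k))\<^sup>2) = 0"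
    by (simp only: of_real_eq_0_iff)
  then have "\<forall>k\<in>{..<n}. (cmod (of_bool (k = m) - v k))\<^sup>2 = 0"
    by (subst (asm) sum_nonneg_eq_0_iff) auto
  then have "of_bool (i = m) - v i = 0"
    using assms(4) by simp
  then show ?thesis
    by simp
qed

lemma householder_adj: "v m \<in> \<real> \<Longrightarrow> cmat_adj n (householder n m v) = householder n m v"
  by (auto intro!: ext simp: householder_def cmat_adj_def Reals_cnj_iff)

lemma householder_column:
  assumes "m < n" "(\<Sum>k<n. (cmod (v k))\<^sup>2) = 1" "v m \<in> \<real>" "i < n"
  shows "householder n m v i m = v i"
proof (cases "v m = 1")
  case True
  then show ?thesis
    using unit_vector_eq_basis_vector[OF assms(1,2) True assms(4)] assms by (simp add: householder_def)
next
  case False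
  then show ?thesis
    using assms by (simp add: householder_def Reals_cnj_iff of_bool_def)
qed

lemma householder_square:
  assumes "m < n" "(\<Sum>k<n. (cmod (v k))\<^sup>2) = 1" "v m \<in> \<real>"
  shows "cmat_mult n (householder n m v) (householder n m v) = cmat_one n"
proof (cases "v m = 1")
  case True
  then have "householder n m v = cmat_one n"
    by (auto intro!: ext simp: householder_def cmat_one_def)
  then show ?thesis
    by (simp add: cmat_mult_one_left)
next
  case False
  define w where "w i = of_bool (i = m) - v i" for i
  define c where "c = 1 - v m"
  have c: "c \<noteq> 0"
    using False by (simp add: c_def)
  have ww: "(\<Sum>k<n. w k * cnj (w k)) = 2 * c"
    using householder_vector_norm[OF assms] by (simp add: w_def c_def)
  have H: "householder n m v i j = (if i < n \<and> j < n then of_bool (i = j) - w i * cnj (w j) / c else 0)"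
    for i j by (simp add: householder_def w_def c_def)
  have of_bool_mult: "of_bool P * x = (if P then x else 0)" "x * of_bool P = (if P then x else 0)"
    for P and x :: complex by simp_all
  show ?thesis
  proof (intro ext)
    fix i j
    show "cmat_mult n (householder n m v) (householder n m v) i j = cmat_one n i j"
    proof (cases "i < n \<and> j < n")
      case True
      have "(\<Sum>k<n. (of_bool (i = k) - w i * cnj (w k) / c) * (of_bool (k = j) - w k * cnj (w j) / c))
          = (\<Sum>k<n. of_bool (i = k) * of_bool (k = j)) - (\<Sum>k<n. of_bool (i = k) * (w k * cnj (w j) / c))
            - (\<Sum>k<n. w i * cnj (w k) / c * of_bool (k = j))
            + w i * cnj (w j) / (c * c) * (\<Sum>k<n. w k * cnj (w k))"
        by (simp add: algebra_simps sum.distrib sum_subtractf sum_distrib_left sum_divide_distrib)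
      also have "\<dots> = of_bool (i = j) - 2 * (w i * cnj (w j) / c) + w i * cnj (w j) / (c * c) * (2 * c)"
        using True by (simp add: ww of_bool_mult sum_divide_distrib[symmetric])
      also have "\<dots> = of_bool (i = j)"
        using c by (simp add: field_simps)
      finally show ?thesis
        using True by (simp add: cmat_mult_def cmat_one_def H)
    qed (auto simp: cmat_mult_def cmat_one_def)
  qed
qed

lemma householder_unitary:
  assumes "m < n" "(\<Sum>k<n. (cmod (v k))\<^sup>2) = 1" "v m \<in> \<real>"
  shows "cmat_unitary n (householder n m v)"
  using householder_square[OF assms] householder_adj[of v m n] assms(3)
  by (simp add: cmat_unitary_def cmat_def householder_def)

lemma exists_unit_multiple:
  fixes c :: "nat \<Rightarrow> complex"
  assumes "j < n" "c j \<noteq> 0"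
  shows "\<exists>\<alpha>. (\<Sum>k<n. (cmod (\<alpha> * c k))\<^sup>2) = 1 \<and> \<alpha> * c m \<in> \<real>"
proof -
  define s where "s = (\<Sum>k<n. (cmod (c k))\<^sup>2)"
  have "0 < (cmod (c j))\<^sup>2" "(cmod (c j))\<^sup>2 \<le> s"
    using assms unfolding s_def by (auto intro!: member_le_sum)
  then have s: "s > 0"
    by linarith
  define \<phi> where "\<phi> = (if c m = 0 then 1 else cnj (sgn (c m)))"
  have \<phi>: "cmod \<phi> = 1"
    by (simp add: \<phi>_def norm_sgn)
  have "\<phi> * c m = of_real (cmod (c m))"
  proof (cases "c m = 0")
    case False
    have "cnj (c m) * c m = of_real (cmod (c m)) * of_real (cmod (c m))"
      by (metis complex_norm_square mult.commute of_real_mult power2_eq_square)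
    then show ?thesis
      using False by (simp add: \<phi>_def sgn_div_norm scaleR_conv_of_real field_simps)
  qed (simp add: \<phi>_def)
  define \<alpha> where "\<alpha> = \<phi> / of_real (sqrt s)"
  have "(\<Sum>k<n. (cmod (\<alpha> * c k))\<^sup>2) = (\<Sum>k<n. (cmod (c k))\<^sup>2) / s"
    using s \<phi> by (simp add: \<alpha>_def norm_mult norm_divide power_mult_distrib power_divide sum_divide_distrib)
  moreover have "\<alpha> * c m \<in> \<real>"
    using \<open>\<phi> * c m = _\<close> by (simp add: \<alpha>_def)
  ultimately show ?thesis
    using s by (auto simp: s_def)
qed

lemma cmat_proj_unit_fixed_vector:
  assumes p: "cmat_proj n p" and "p \<noteq> (\<lambda>i j. 0)"
  shows "\<exists>v. (\<Sum>k<n. (cmod (v k))\<^sup>2) = 1 \<and> v m \<in> \<real> \<and> (\<forall>i<n. (\<Sum>k<n. p i k * v k) = v i)"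
proof -
  obtain i\<^sub>0 j\<^sub>0 where "p i\<^sub>0 j\<^sub>0 \<noteq> 0"
    using assms(2) by blast
  moreover have "i\<^sub>0 < n" "j\<^sub>0 < n"
    using p calculation by (auto simp: cmat_proj_def cmat_def)
  ultimately obtain \<alpha> where \<alpha>: "(\<Sum>k<n. (cmod (\<alpha> * p k j\<^sub>0))\<^sup>2) = 1" "\<alpha> * p m j\<^sub>0 \<in> \<real>"
    using exists_unit_multiple[of i\<^sub>0 n "\<lambda>i. p i j\<^sub>0" m] by blast
  have "(\<Sum>k<n. p i k * (\<alpha> * p k j\<^sub>0)) = \<alpha> * p i j\<^sub>0" if "i < n" for i
  proof -
    have "(\<Sum>k<n. p i k * (\<alpha> * p k j\<^sub>0)) = \<alpha> * cmat_mult n p p i j\<^sub>0"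
      using that \<open>j\<^sub>0 < n\<close> by (simp add: cmat_mult_def sum_distrib_left algebra_simps)
    then show ?thesis
      using p by (simp add: cmat_proj_def)
  qed
  then show ?thesis
    using \<alpha> by (intro exI[of _ "\<lambda>i. \<alpha> * p i j\<^sub>0"]) auto
qed

lemma cmat_conj_householder_column:
  assumes p: "cmat_proj n p" and v: "m < n" "(\<Sum>k<n. (cmod (v k))\<^sup>2) = 1" "v m \<in> \<real>"
    and pv: "\<forall>i<n. (\<Sum>k<n. p i k * v k) = v i" and "i < n"
  shows "cmat_conj n (householder n m v) p i m = of_bool (i = m)"
proof -
  let ?H = "householder n m v"
  have Hcol: "?H k m = v k" if "k < n" for k
    using that v by (simp add: householder_column)
  have pH: "(\<Sum>l<n. p k l * ?H l m) = ?H k m" if "k < n" for k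
  proof -
    have "(\<Sum>l<n. p k l * ?H l m) = (\<Sum>l<n. p k l * v l)"
      by (intro sum.cong) (auto simp: Hcol)
    then show ?thesis
      using that pv Hcol by simp
  qed
  have "cmat_conj n ?H p i m = cmat_mult n ?H (cmat_mult n p ?H) i m"
    using v(3) by (simp add: cmat_conj_def householder_adj cmat_mult_assoc)
  also have "\<dots> = cmat_mult n ?H ?H i m"
    using \<open>i < n\<close> v(1) by (auto simp: cmat_mult_def pH intro!: sum.cong)
  also have "\<dots> = of_bool (i = m)"
    using householder_square[OF v] \<open>i < n\<close> by (simp add: cmat_one_def)
  finally show ?thesis .
qed

definition cmat_extend :: "nat \<Rightarrow> complex mat \<Rightarrow> complex mat" where
  "cmat_extend m X = (\<lambda>i j. if i = m \<and> j = m then 1 else X i j)"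

lemma cmat_cmat_extend: "cmat m X \<Longrightarrow> cmat (Suc m) (cmat_extend m X)"
  by (auto simp: cmat_def cmat_extend_def)

lemma cmat_mult_extend:
  assumes "cmat m X" "cmat m Y"
  shows "cmat_mult (Suc m) (cmat_extend m X) (cmat_extend m Y) = cmat_extend m (cmat_mult m X Y)"
proof (intro ext)
  fix i j
  have "(\<Sum>k<Suc m. cmat_extend m X i k * cmat_extend m Y k j)
      = (\<Sum>k<m. X i k * Y k j) + cmat_extend m X i m * cmat_extend m Y m j"
    by (simp add: cmat_extend_def)
  then show "cmat_mult (Suc m) (cmat_extend m X) (cmat_extend m Y) i j = cmat_extend m (cmat_mult m X Y) i j"
    using assms by (auto simp: cmat_mult_def cmat_extend_def cmat_def less_Suc_eq)
qed

lemma cmat_adj_extend: "cmat m X \<Longrightarrow> cmat_adj (Suc m) (cmat_extend m X) = cmat_extend m (cmat_adj m X)"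
  by (auto intro!: ext simp: cmat_adj_def cmat_extend_def cmat_def)

lemma cmat_extend_inj: "cmat m X \<Longrightarrow> cmat m Y \<Longrightarrow> cmat_extend m X = cmat_extend m Y \<Longrightarrow> X = Y"
  unfolding cmat_def cmat_extend_def by (intro ext) (metis less_irrefl)

lemma cmat_unitary_extend: "cmat_unitary m V \<Longrightarrow> cmat_unitary (Suc m) (cmat_extend m V)"
  by (simp add: cmat_unitary_def cmat_cmat_extend cmat_adj_extend cmat_mult_extend)
    (auto intro!: ext simp: cmat_extend_def cmat_one_def)

lemma cmat_conj_extend:
  "cmat m V \<Longrightarrow> cmat m X \<Longrightarrow>
   cmat_conj (Suc m) (cmat_extend m V) (cmat_extend m X) = cmat_extend m (cmat_conj m V X)"
  by (simp add: cmat_conj_def cmat_adj_extend cmat_mult_extend)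

lemma cmat_proj_last_column_unit:
  assumes B: "cmat_proj (Suc m) B" and col: "\<forall>i<Suc m. B i m = of_bool (i = m)"
  shows "\<exists>p. cmat_proj m p \<and> B = cmat_extend m p"
proof -
  define p where "p i j = (if i < m \<and> j < m then B i j else 0)" for i j
  have p: "cmat m p"
    by (simp add: cmat_def p_def)
  have row: "B m j = of_bool (j = m)" if "j < Suc m" for j
  proof -
    have "B m j = cmat_adj (Suc m) B m j"
      using B by (simp add: cmat_proj_def)
    also have "\<dots> = cnj (B j m)"
      using that by (simp add: cmat_adj_def)
    finally show ?thesis
      using col that by simp
  qed
  have out: "B i j = 0" if "\<not> (i < Suc m \<and> j < Suc m)" for i j
    using B that by (simp add: cmat_proj_def cmat_def)
  have Bp: "B = cmat_extend m p"
  proof (intro ext)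
    fix i j
    show "B i j = cmat_extend m p i j"
      using col row[of j] out[of i j] by (cases "i < Suc m \<and> j < Suc m")
        (auto simp: cmat_extend_def p_def less_Suc_eq)
  qed
  have "cmat_extend m (cmat_mult m p p) = cmat_extend m p" "cmat_extend m (cmat_adj m p) = cmat_extend m p"
    using B p by (simp_all add: Bp cmat_proj_def cmat_mult_extend cmat_adj_extend)
  then have "cmat_proj m p"
    using p cmat_extend_inj[of m _ p] by (simp add: cmat_proj_def)
  with Bp show ?thesis
    by blast
qed

definition diag_proj :: "nat \<Rightarrow> nat \<Rightarrow> complex mat" where
  "diag_proj n r = (\<lambda>i j. if i = j \<and> n - r \<le> i \<and> i < n then 1 else 0)"

lemma cmat_proj_diag_proj: "cmat_proj n (diag_proj n r)"
proof -
  have "cmat_mult n (diag_proj n r) (diag_proj n r) = diag_proj n r"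
    by (auto intro!: ext simp: cmat_mult_def diag_proj_def if_distrib[of "\<lambda>x. x * _"] cong: if_cong)
  then show ?thesis
    by (auto intro!: ext simp: cmat_proj_def cmat_def cmat_adj_def diag_proj_def)
qed

lemma cmat_trace_diag_proj:
  assumes "r \<le> n"
  shows "cmat_trace n (diag_proj n r) = of_nat r"
proof -
  have "cmat_trace n (diag_proj n r) = (\<Sum>i\<in>{n - r..<n}. 1)"
    unfolding cmat_trace_def diag_proj_def by (intro sum.mono_neutral_cong_right) auto
  then show ?thesis
    using assms by simp
qed

lemma cmat_extend_diag_proj: "r \<le> m \<Longrightarrow> cmat_extend m (diag_proj m r) = diag_proj (Suc m) (Suc r)"
  by (auto intro!: ext simp: cmat_extend_def diag_proj_def)

theorem cmat_proj_unitarily_diagonalizable: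
  "cmat_proj n p \<Longrightarrow> \<exists>U r. cmat_unitary n U \<and> r \<le> n \<and> cmat_conj n U p = diag_proj n r"
proof (induction n arbitrary: p)
  case 0
  have "cmat_conj 0 (cmat_one 0) p = diag_proj 0 0"
    by (auto intro!: ext simp: cmat_conj_def cmat_mult_def diag_proj_def)
  then show ?case
    using cmat_unitary_one by blast
next
  case (Suc m p)
  show ?case
  proof (cases "p = (\<lambda>i j. 0)")
    case True
    have "cmat_conj (Suc m) (cmat_one (Suc m)) p = diag_proj (Suc m) 0"
      by (auto intro!: ext simp: True cmat_conj_def cmat_mult_def diag_proj_def)
    then show ?thesis
      using cmat_unitary_one by blast
  next
    case False
    \<comment> \<open>Reflect a unit vector fixed by \<open>p\<close> onto \<open>e\<^sub>m\<close>; the conjugate of \<open>p\<close> is then \<open>diag(p', 1)\<close>.\<close>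
    obtain v where v: "(\<Sum>k<Suc m. (cmod (v k))\<^sup>2) = 1" "v m \<in> \<real>"
      and pv: "\<forall>i<Suc m. (\<Sum>k<Suc m. p i k * v k) = v i"
      using cmat_proj_unit_fixed_vector[OF Suc.prems False] by blast
    define H where "H = householder (Suc m) m v"
    have H: "cmat_unitary (Suc m) H"
      using householder_unitary[OF lessI v] by (simp add: H_def)
    obtain p' where p': "cmat_proj m p'" "cmat_conj (Suc m) H p = cmat_extend m p'"
      using cmat_proj_last_column_unit[OF cmat_proj_conj[OF H Suc.prems]]
        cmat_conj_householder_column[OF Suc.prems lessI v pv] by (auto simp: H_def)
    obtain V r where V: "cmat_unitary m V" "r \<le> m" "cmat_conj m V p' = diag_proj m r"
      using Suc.IH[OF p'(1)] by blast
    define U where "U = cmat_mult (Suc m) (cmat_extend m V) H"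
    have "cmat_conj (Suc m) U p = diag_proj (Suc m) (Suc r)"
      using V p' by (simp add: U_def cmat_conj_mult cmat_conj_extend cmat_unitary_def cmat_proj_def
          cmat_extend_diag_proj)
    moreover have "cmat_unitary (Suc m) U"
      using H V by (simp add: U_def cmat_unitary_mult cmat_unitary_extend)
    ultimately show ?thesis
      using V(2) by (intro exI[of _ U] exI[of _ "Suc r"]) simp
  qed
qed

lemma cmat_proj_trace_nat:
  assumes "cmat_proj n p"
  shows "\<exists>r. cmat_trace n p = of_nat r"
proof -
  obtain U r where "cmat_unitary n U" "r \<le> n" "cmat_conj n U p = diag_proj n r"
    using cmat_proj_unitarily_diagonalizable[OF assms] by blast
  then have "cmat_trace n p = of_nat r"
    using assms by (metis cmat_proj_def cmat_trace_conj cmat_trace_diag_proj)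
  then show ?thesis ..
qed

lemma cmat_proj_conj_of_trace_eq:
  assumes p: "cmat_proj n p" and q: "cmat_proj n q" and "cmat_trace n p = cmat_trace n q"
  shows "\<exists>W. cmat_unitary n W \<and> p = cmat_conj n W q"
proof -
  obtain U r where U: "cmat_unitary n U" "r \<le> n" "cmat_conj n U p = diag_proj n r"
    using cmat_proj_unitarily_diagonalizable[OF p] by blast
  obtain V s where V: "cmat_unitary n V" "s \<le> n" "cmat_conj n V q = diag_proj n s"
    using cmat_proj_unitarily_diagonalizable[OF q] by blast
  have "(of_nat r :: complex) = of_nat s"
    using U V p q assms(3) by (metis cmat_proj_def cmat_trace_conj cmat_trace_diag_proj)
  then have "cmat_conj n U p = cmat_conj n V q"
    using U V by simp
  then have "p = cmat_conj n (cmat_adj n U) (cmat_conj n V q)"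
    using U p by (metis cmat_conj_adj_cancel cmat_proj_def)
  then have "p = cmat_conj n (cmat_mult n (cmat_adj n U) V) q"
    by (simp add: cmat_conj_mult)
  then show ?thesis
    using cmat_unitary_mult[OF cmat_unitary_adj[OF U(1)] V(1)] by blast
qed

definition cmat_rank :: "nat \<Rightarrow> complex mat \<Rightarrow> nat" where
  "cmat_rank n p = (SOME r. cmat_trace n p = of_nat r)"

lemma cmat_trace_eq_rank: "cmat_proj n p \<Longrightarrow> cmat_trace n p = of_nat (cmat_rank n p)"
  unfolding cmat_rank_def by (rule someI_ex[OF cmat_proj_trace_nat])

lemma cmat_rank_eq_iff:
  "cmat_proj n p \<Longrightarrow> cmat_proj m q \<Longrightarrow> cmat_rank n p = cmat_rank m q \<longleftrightarrow> cmat_trace n p = cmat_trace m q"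
  by (simp add: cmat_trace_eq_rank)

lemma exists_unitary_conj_iff_trace_eq:
  assumes pq: "cmat_proj n p" "cmat_proj m q"
  shows "(\<exists>N u. n \<le> N \<and> m \<le> N \<and> cmat_unitary N u \<and> p = cmat_conj N u q)
    \<longleftrightarrow> cmat_trace n p = cmat_trace m q"
proof -
  have resize: "cmat_trace N p = cmat_trace n p" "cmat_trace N q = cmat_trace m q"
    if "n \<le> N" "m \<le> N" for N
    using pq that by (simp_all add: cmat_proj_def cmat_trace_resize)
  show ?thesis
  proof
    assume "\<exists>N u. n \<le> N \<and> m \<le> N \<and> cmat_unitary N u \<and> p = cmat_conj N u q"
    then obtain N u where N: "n \<le> N" "m \<le> N" and u: "cmat_unitary N u" "p = cmat_conj N u q"
      by blast
    have "cmat_trace n p = cmat_trace N (cmat_conj N u q)"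
      using resize[OF N] u(2) by simp
    also have "\<dots> = cmat_trace m q"
      using resize[OF N] cmat_trace_conj[OF u(1)] cmat_mono[OF _ N(2)] pq(2)
      by (simp add: cmat_proj_def)
    finally show "cmat_trace n p = cmat_trace m q" .
  next
    assume "cmat_trace n p = cmat_trace m q"
    then have "cmat_trace (max n m) p = cmat_trace (max n m) q"
      using resize by simp
    then obtain u where "cmat_unitary (max n m) u" "p = cmat_conj (max n m) u q"
      using cmat_proj_conj_of_trace_eq cmat_proj_mono pq by (metis max.cobounded1 max.cobounded2)
    then show "\<exists>N u. n \<le> N \<and> m \<le> N \<and> cmat_unitary N u \<and> p = cmat_conj N u q"
      by (intro exI[of _ "max n m"]) auto
  qed
qed

lemma proj_equiv_complex_iff:
  "proj_equiv complex_salg P Q \<longleftrightarrow>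
     projector complex_salg P \<and> projector complex_salg Q \<and> case_prod cmat_rank P = case_prod cmat_rank Q"
proof -
  obtain n p m q where PQ: "P = (n, p)" "Q = (m, q)"
    by (cases P, cases Q)
  have proj_equiv_unfolded: "proj_equiv complex_salg P Q \<longleftrightarrow> cmat_proj n p \<and> cmat_proj m q
      \<and> (\<exists>N u. n \<le> N \<and> m \<le> N \<and> cmat_unitary N u \<and> p = cmat_conj N u q)"
    unfolding proj_equiv_def PQ mmul_complex_salg mstar_complex_salg cmat_conj_def[symmetric]
    by (simp add: projector_complex_salg unitary_complex_salg)
  show ?thesis
  proof (cases "cmat_proj n p \<and> cmat_proj m q")
    case True
    then show ?thesis
      using proj_equiv_unfolded exists_unitary_conj_iff_trace_eq
      by (simp add: PQ projector_complex_salg cmat_rank_eq_iff)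
  qed (use proj_equiv_unfolded in \<open>auto simp: PQ projector_complex_salg\<close>)
qed

definition cmat_block_diag :: "nat \<Rightarrow> nat \<Rightarrow> complex mat \<Rightarrow> complex mat \<Rightarrow> complex mat" where
  "cmat_block_diag n m p q = (\<lambda>i j. if i < n \<and> j < n then p i j
     else if n \<le> i \<and> n \<le> j \<and> i < n + m \<and> j < n + m then q (i - n) (j - n) else 0)"

lemma sa_zero_complex_salg: "sa_zero complex_salg = 0"
  by (simp add: complex_salg_def)

lemma dsum_complex_salg: "dsum complex_salg (n, p) (m, q) = (n + m, cmat_block_diag n m p q)"
  unfolding dsum_def cmat_block_diag_def sa_zero_complex_salg by simp

lemma sum_lessThan_add: "(\<Sum>k<n + m. f k) = (\<Sum>k<n. f k) + (\<Sum>k<m. f (n + k))"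
  for m :: nat
  by (induction m) (simp_all add: add.assoc)

lemma cmat_proj_block_diag:
  assumes p: "cmat_proj n p" and q: "cmat_proj m q"
  shows "cmat_proj (n + m) (cmat_block_diag n m p q)"
proof -
  let ?D = "cmat_block_diag n m p q"
  have "cmat_mult (n + m) ?D ?D i j = ?D i j" for i j
  proof (cases "i < n + m \<and> j < n + m")
    case True
    have "cmat_mult (n + m) ?D ?D i j = (\<Sum>k<n. ?D i k * ?D k j) + (\<Sum>k<m. ?D i (n + k) * ?D (n + k) j)"
      using True by (simp add: cmat_mult_def sum_lessThan_add)
    also have "\<dots> = ?D i j"
    proof (cases "i < n")
      case True
      then have "(\<Sum>k<n. ?D i k * ?D k j) = (if j < n then cmat_mult n p p i j else 0)"
        by (simp add: cmat_mult_def cmat_block_diag_def)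
      then show ?thesis
        using True p by (simp add: cmat_block_diag_def cmat_proj_def)
    next
      case False
      then have "(\<Sum>k<m. ?D i (n + k) * ?D (n + k) j) = (if n \<le> j \<and> j < n + m then cmat_mult m q q (i - n) (j - n) else 0)"
        using \<open>i < n + m \<and> j < n + m\<close> by (auto simp: cmat_mult_def cmat_block_diag_def)
      then show ?thesis
        using False q \<open>i < n + m \<and> j < n + m\<close> by (simp add: cmat_block_diag_def cmat_proj_def)
    qed
    finally show ?thesis .
  qed (auto simp: cmat_mult_def cmat_block_diag_def)
  moreover have "cmat_adj (n + m) ?D = ?D"
  proof -
    have "cnj (p j i) = p i j" if "i < n" "j < n" for i j
      using p that by (metis cmat_adj_def cmat_proj_def)
    moreover have "cnj (q j i) = q i j" if "i < m" "j < m" for i j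
      using q that by (metis cmat_adj_def cmat_proj_def)
    ultimately show ?thesis
      by (auto intro!: ext simp: cmat_adj_def cmat_block_diag_def)
  qed
  ultimately show ?thesis
    by (auto simp: cmat_proj_def cmat_def cmat_block_diag_def)
qed

lemma cmat_trace_block_diag:
  "cmat_trace (n + m) (cmat_block_diag n m p q) = cmat_trace n p + cmat_trace m q"
  by (simp add: cmat_trace_def sum_lessThan_add cmat_block_diag_def)

lemma K0_rank_complex: "K0_rank complex_salg (case_prod cmat_rank)"
proof
  fix P Q
  show "proj_equiv complex_salg P Q \<longleftrightarrow>
     projector complex_salg P \<and> projector complex_salg Q \<and> case_prod cmat_rank P = case_prod cmat_rank Q"
    by (rule proj_equiv_complex_iff)
  obtain n p m q where PQ: "P = (n, p)" "Q = (m, q)"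
    by (cases P, cases Q)
  assume "projector complex_salg P" "projector complex_salg Q"
  then have pq: "cmat_proj n p" "cmat_proj m q"
    by (simp_all add: projector_complex_salg PQ)
  then show "projector complex_salg (dsum complex_salg P Q)"
    by (simp add: PQ projector_complex_salg dsum_complex_salg cmat_proj_block_diag)
  have "of_nat (cmat_rank (n + m) (cmat_block_diag n m p q)) = (of_nat (cmat_rank n p + cmat_rank m q) :: complex)"
    using pq cmat_proj_block_diag[OF pq] by (simp flip: cmat_trace_eq_rank add: cmat_trace_block_diag)
  then show "case_prod cmat_rank (dsum complex_salg P Q) = case_prod cmat_rank P + case_prod cmat_rank Q"
    by (simp only: PQ dsum_complex_salg prod.case of_nat_eq_iff)
next
  have "cmat_proj 0 (\<lambda>i j. 0)"
    by (simp add: cmat_proj_def cmat_def cmat_mult_def cmat_adj_def)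
  then show "projector complex_salg (zero_proj complex_salg)"
    and "case_prod cmat_rank (zero_proj complex_salg) = 0"
    using cmat_trace_eq_rank[of 0]
    by (simp_all add: projector_complex_salg zero_proj_def sa_zero_complex_salg cmat_trace_def)
next
  fix r
  show "\<exists>P. projector complex_salg P \<and> case_prod cmat_rank P = r"
    using cmat_proj_diag_proj[of r r] cmat_trace_eq_rank cmat_trace_diag_proj[of r r]
    by (intro exI[of _ "(r, diag_proj r r)"]) (simp add: projector_complex_salg)
qed

section \<open>Leading monomials in A(R^2_theta)\<close>

definition deglex_le :: "nat \<times> nat \<Rightarrow> nat \<times> nat \<Rightarrow> bool" where
  "deglex_le m M \<longleftrightarrow> fst m + snd m < fst M + snd M \<or> (fst m + snd m = fst M + snd M \<and> fst m \<le> fst M)"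

lemma deglex_le_zero: "deglex_le m (0, 0) \<longleftrightarrow> m = (0, 0)"
  by (cases m) (auto simp: deglex_le_def)

lemma not_deglex_le_double: "M \<noteq> (0, 0) \<Longrightarrow> \<not> deglex_le (2 * fst M, 2 * snd M) M"
  by (cases M) (auto simp: deglex_le_def)

lemma finite_deglex_le: "finite {m. deglex_le m M}"
  by (rule finite_subset[of _ "{..fst M + snd M} \<times> {..fst M + snd M}"]) (auto simp: deglex_le_def)

lemma exists_deglex_max:
  assumes "finite S" "S \<noteq> {}"
  shows "\<exists>M\<in>S. \<forall>m\<in>S. deglex_le m M"
proof -
  define d where "d = Max ((\<lambda>m. fst m + snd m) ` S)"
  define D where "D = {m \<in> S. fst m + snd m = d}"
  have "d \<in> (\<lambda>m. fst m + snd m) ` S"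
    using assms unfolding d_def by (intro Max_in) auto
  then obtain m\<^sub>0 where "m\<^sub>0 \<in> S" "fst m\<^sub>0 + snd m\<^sub>0 = d"
    by auto
  then have "m\<^sub>0 \<in> D"
    by (simp add: D_def)
  moreover have "finite D"
    using assms(1) by (simp add: D_def)
  ultimately obtain M where M: "M \<in> D" "fst M = Max (fst ` D)"
    by (metis (no_types, lifting) Max_in empty_iff finite_imageI image_iff image_is_empty)
  have "deglex_le m M" if "m \<in> S" for m
  proof (cases "m \<in> D")
    case True
    then show ?thesis
      using M \<open>finite D\<close> by (auto simp: deglex_le_def D_def)
  next
    case False
    have "fst m + snd m \<le> d"
      using assms(1) that unfolding d_def by (intro Max_ge) auto
    then show ?thesis
      using M False that by (auto simp: deglex_le_def D_def)
  qed
  moreover have "M \<in> S"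
    using M(1) by (simp add: D_def)
  ultimately show ?thesis
    by blast
qed

lemma deglex_sum_eq_double_iff:
  assumes "deglex_le (p, q) M" "deglex_le (r, s) M" "k \<le> q" "k \<le> r"
  shows "p + r - k = 2 * fst M \<and> q + s - k = 2 * snd M \<longleftrightarrow> k = 0 \<and> (p, q) = M \<and> (r, s) = M"
  using assms by (cases M) (auto simp: deglex_le_def)

lemma moyal_mul_double_lead:
  assumes fin: "finite (supp2 f)" "finite (supp2 g)"
    and lead: "\<forall>m\<in>supp2 f. deglex_le m M" "\<forall>m\<in>supp2 g. deglex_le m M"
  shows "moyal_mul \<theta> f g (2 * fst M, 2 * snd M) = f M * g M"
proof -
  have inner: "(\<Sum>k\<in>{..min q r}. if p + r - k = 2 * fst M \<and> q + s - k = 2 * snd M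
        then f (p, q) * g (r, s) * of_nat (q choose k) * of_nat (r choose k) * of_nat (fact k)
             * (\<i> * of_real \<theta>) ^ k
        else 0) = (if (p, q) = M then if (r, s) = M then f M * g M else 0 else 0)"
    if "(p, q) \<in> supp2 f" "(r, s) \<in> supp2 g" for p q r s
  proof -
    have "(\<Sum>k\<in>{..min q r}. if p + r - k = 2 * fst M \<and> q + s - k = 2 * snd M
        then f (p, q) * g (r, s) * of_nat (q choose k) * of_nat (r choose k) * of_nat (fact k)
             * (\<i> * of_real \<theta>) ^ k
        else 0) = (\<Sum>k\<in>{..min q r}. if k = 0 then (if (p, q) = M then if (r, s) = M then f M * g M else 0 else 0) else 0)"
      using that lead by (intro sum.cong refl) (auto simp: deglex_sum_eq_double_iff)
    then show ?thesis
      by simp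
  qed
  have "moyal_mul \<theta> f g (2 * fst M, 2 * snd M)
      = (\<Sum>x\<in>supp2 f. \<Sum>y\<in>supp2 g. if x = M then if y = M then f M * g M else 0 else 0)"
    unfolding moyal_mul_def prod.case
    by (intro sum.cong refl; simp only: split_paired_all prod.case; intro sum.cong refl;
        simp only: split_paired_all prod.case inner)
  also have "\<dots> = (if M \<in> supp2 f \<and> M \<in> supp2 g then f M * g M else 0)"
    using fin by (cases "M \<in> supp2 f"; cases "M \<in> supp2 g") (simp_all add: sum.If_cases)
  also have "\<dots> = f M * g M"
    by (simp add: supp2_def)
  finally show ?thesis .
qed

lemma moyal_star_lead:
  assumes fin: "finite (supp2 f)" and lead: "\<forall>m\<in>supp2 f. deglex_le m M"
  shows "moyal_star \<theta> f M = cnj (f M)"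
proof -
  obtain a b where M: "M = (a, b)"
    by (cases M)
  have inner: "(\<Sum>k\<in>{..min p q}. if p - k = a \<and> q - k = b
        then cnj (f (p, q)) * of_nat (q choose k) * of_nat (p choose k) * of_nat (fact k)
             * (\<i> * of_real \<theta>) ^ k
        else 0) = (if (p, q) = M then cnj (f M) else 0)"
    if "(p, q) \<in> supp2 f" for p q
  proof -
    have "(\<Sum>k\<in>{..min p q}. if p - k = a \<and> q - k = b
        then cnj (f (p, q)) * of_nat (q choose k) * of_nat (p choose k) * of_nat (fact k)
             * (\<i> * of_real \<theta>) ^ k
        else 0) = (\<Sum>k\<in>{..min p q}. if k = 0 then (if (p, q) = M then cnj (f M) else 0) else 0)"
      using that lead by (intro sum.cong refl) (auto simp: M deglex_le_def)
    then show ?thesis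
      by simp
  qed
  have "moyal_star \<theta> f M = (\<Sum>x\<in>supp2 f. if x = M then cnj (f M) else 0)"
    unfolding moyal_star_def M prod.case
    by (intro sum.cong refl; simp only: split_paired_all prod.case M[symmetric] inner)
  also have "\<dots> = cnj (f M)"
    using fin by (simp add: supp2_def)
  finally show ?thesis .
qed

lemma supp2_moyal_star:
  "supp2 (moyal_star \<theta> f) \<subseteq> {(p - k, q - k) | p q k. (p, q) \<in> supp2 f \<and> k \<le> p \<and> k \<le> q}"
proof
  fix m
  assume m: "m \<in> supp2 (moyal_star \<theta> f)"
  show "m \<in> {(p - k, q - k) | p q k. (p, q) \<in> supp2 f \<and> k \<le> p \<and> k \<le> q}"
  proof (rule ccontr)
    assume "m \<notin> {(p - k, q - k) | p q k. (p, q) \<in> supp2 f \<and> k \<le> p \<and> k \<le> q}"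
    then have "moyal_star \<theta> f m = 0"
      unfolding moyal_star_def by (cases m) (auto intro!: sum.neutral)
    then show False
      using m by (simp add: supp2_def)
  qed
qed

lemma moyal_star_supp_deglex:
  assumes "\<forall>m\<in>supp2 f. deglex_le m M" "m \<in> supp2 (moyal_star \<theta> f)"
  shows "deglex_le m M"
  using supp2_moyal_star assms by (fastforce simp: deglex_le_def)

lemma finite_supp2_moyal_star:
  "finite (supp2 f) \<Longrightarrow> \<forall>m\<in>supp2 f. deglex_le m M \<Longrightarrow> finite (supp2 (moyal_star \<theta> f))"
  using moyal_star_supp_deglex finite_deglex_le by (metis (no_types) finite_subset mem_Collect_eq subsetI)

lemma asum_A_theta: "asum (A_theta \<theta>) xs m = (\<Sum>x\<leftarrow>xs. x m)"
  by (induction xs) (auto simp: asum_def A_theta_def)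

lemma mmul_A_theta: "mmul (A_theta \<theta>) n P Q i j m =
   (if i < n \<and> j < n then (\<Sum>k<n. moyal_mul \<theta> (P i k) (Q k j) m) else 0)"
  by (simp add: mmul_def asum_A_theta interv_sum_list_conv_sum_set_nat atLeast0LessThan comp_def)
    (simp add: A_theta_def)

lemma mstar_A_theta:
  "mstar (A_theta \<theta>) n P i j = (if i < n \<and> j < n then moyal_star \<theta> (P j i) else (\<lambda>_. 0))"
  by (simp add: mstar_def A_theta_def)

lemma mat_in_A_theta: "mat_in (A_theta \<theta>) n P \<longleftrightarrow>
   (\<forall>i j. i < n \<and> j < n \<longrightarrow> finite (supp2 (P i j))) \<and> (\<forall>i j. \<not> (i < n \<and> j < n) \<longrightarrow> P i j = (\<lambda>_. 0))"
  by (simp add: mat_in_def A_theta_def)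

lemma gram_diag_double_lead:
  assumes P: "mat_in (A_theta \<theta>) n P" and "i < n" and lead: "\<forall>k<n. \<forall>m\<in>supp2 (P i k). deglex_le m M"
  shows "mmul (A_theta \<theta>) n P (mstar (A_theta \<theta>) n P) i i (2 * fst M, 2 * snd M)
    = of_real (\<Sum>k<n. (cmod (P i k M))\<^sup>2)"
proof -
  have "moyal_mul \<theta> (P i k) (moyal_star \<theta> (P i k)) (2 * fst M, 2 * snd M) = of_real ((cmod (P i k M))\<^sup>2)"
    if "k < n" for k
  proof -
    have fin: "finite (supp2 (P i k))"
      using P \<open>i < n\<close> that by (simp add: mat_in_A_theta)
    have lead_k: "\<forall>m\<in>supp2 (P i k). deglex_le m M"
      using lead that by blast
    have "moyal_mul \<theta> (P i k) (moyal_star \<theta> (P i k)) (2 * fst M, 2 * snd M)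
        = P i k M * moyal_star \<theta> (P i k) M"
      using moyal_star_supp_deglex[OF lead_k]
      by (intro moyal_mul_double_lead fin finite_supp2_moyal_star[OF fin lead_k] lead_k) auto
    then show ?thesis
      by (simp only: moyal_star_lead[OF fin lead_k] complex_norm_square)
  qed
  then show ?thesis
    using \<open>i < n\<close> by (simp add: mmul_A_theta mstar_A_theta of_real_sum)
qed

section \<open>Projectors and unitaries over A(R^2_theta) are scalar\<close>

lemma supp2_trivial_if_gram_lead_vanishes:
  assumes P: "mat_in (A_theta \<theta>) n P"
    and gram: "\<And>M i. M \<noteq> (0, 0) \<Longrightarrow> i < n \<Longrightarrow> \<forall>i<n. \<forall>k<n. \<forall>m\<in>supp2 (P i k). deglex_le m M \<Longrightarrow>
        mmul (A_theta \<theta>) n P (mstar (A_theta \<theta>) n P) i i (2 * fst M, 2 * snd M) = 0"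
    and "i < n" "k < n"
  shows "supp2 (P i k) \<subseteq> {(0, 0)}"
proof (rule ccontr)
  define S where "S = (\<Union>i<n. \<Union>k<n. supp2 (P i k))"
  assume "\<not> supp2 (P i k) \<subseteq> {(0, 0)}"
  then obtain m\<^sub>0 where m\<^sub>0: "m\<^sub>0 \<in> S" "m\<^sub>0 \<noteq> (0, 0)"
    using assms(3,4) by (auto simp: S_def)
  moreover have "finite S"
    using P by (auto simp: S_def mat_in_A_theta)
  ultimately obtain M where "M \<in> S" and max: "\<forall>m\<in>S. deglex_le m M"
    using exists_deglex_max by blast
  then obtain i\<^sub>1 k\<^sub>1 where i\<^sub>1: "i\<^sub>1 < n" and "k\<^sub>1 < n" "M \<in> supp2 (P i\<^sub>1 k\<^sub>1)"
    by (auto simp: S_def)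
  have lead: "\<forall>i<n. \<forall>k<n. \<forall>m\<in>supp2 (P i k). deglex_le m M"
    using max by (auto simp: S_def)
  have "M \<noteq> (0, 0)"
    using max m\<^sub>0 deglex_le_zero by blast
  then have "of_real (\<Sum>k<n. (cmod (P i\<^sub>1 k M))\<^sup>2) = (0 :: complex)"
    using gram[OF _ i\<^sub>1 lead] gram_diag_double_lead[OF P i\<^sub>1] lead i\<^sub>1 by simp
  moreover have "0 < (cmod (P i\<^sub>1 k\<^sub>1 M))\<^sup>2"
    using \<open>M \<in> supp2 (P i\<^sub>1 k\<^sub>1)\<close> by (simp add: supp2_def)
  moreover have "(cmod (P i\<^sub>1 k\<^sub>1 M))\<^sup>2 \<le> (\<Sum>k<n. (cmod (P i\<^sub>1 k M))\<^sup>2)"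
    using \<open>k\<^sub>1 < n\<close> by (intro member_le_sum) auto
  ultimately show False
    by (simp only: of_real_eq_0_iff)
qed

definition const_part :: "(nat \<times> nat \<Rightarrow> complex) mat \<Rightarrow> complex mat" where
  "const_part P = (\<lambda>i j. P i j (0, 0))"

definition scalar_mat :: "complex mat \<Rightarrow> (nat \<times> nat \<Rightarrow> complex) mat" where
  "scalar_mat p = (\<lambda>i j. scalar_incl (p i j))"

lemma const_part_scalar_mat [simp]: "const_part (scalar_mat p) = p"
  by (simp add: const_part_def scalar_mat_def scalar_incl_def)

lemma scalar_mat_inj: "scalar_mat p = scalar_mat q \<longleftrightarrow> p = q"
  by (metis const_part_scalar_mat)

lemma eq_scalar_mat_const_part:
  assumes "mat_in (A_theta \<theta>) n P" "\<And>i k. i < n \<Longrightarrow> k < n \<Longrightarrow> supp2 (P i k) \<subseteq> {(0, 0)}"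
  shows "P = scalar_mat (const_part P)"
proof (intro ext)
  fix i j m
  show "P i j m = scalar_mat (const_part P) i j m"
    using assms unfolding mat_in_A_theta
    by (cases "i < n \<and> j < n") (auto simp: scalar_mat_def const_part_def scalar_incl_def supp2_def)
qed

lemma projector_A_theta_scalar:
  assumes "projector (A_theta \<theta>) (n, P)"
  shows "P = scalar_mat (const_part P)"
proof -
  have P: "mat_in (A_theta \<theta>) n P" "mmul (A_theta \<theta>) n P P = P" "mstar (A_theta \<theta>) n P = P"
    using assms by (simp_all add: projector_def)
  have gram: "mmul (A_theta \<theta>) n P (mstar (A_theta \<theta>) n P) i i (2 * fst M, 2 * snd M) = 0"
    if "M \<noteq> (0, 0)" "i < n" "\<forall>i<n. \<forall>k<n. \<forall>m\<in>supp2 (P i k). deglex_le m M" for M i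
  proof (rule ccontr)
    assume "mmul (A_theta \<theta>) n P (mstar (A_theta \<theta>) n P) i i (2 * fst M, 2 * snd M) \<noteq> 0"
    then have "deglex_le (2 * fst M, 2 * snd M) M"
      using that(2,3) P by (simp add: supp2_def)
    then show False
      using not_deglex_le_double[OF that(1)] by contradiction
  qed
  show ?thesis
    using supp2_trivial_if_gram_lead_vanishes[OF P(1) gram] by (intro eq_scalar_mat_const_part[OF P(1)])
qed

lemma unitary_A_theta_scalar:
  assumes "unitary (A_theta \<theta>) n U"
  shows "U = scalar_mat (const_part U)"
proof -
  have U: "mat_in (A_theta \<theta>) n U" "mmul (A_theta \<theta>) n U (mstar (A_theta \<theta>) n U) = mid (A_theta \<theta>) n"
    using assms by (simp_all add: unitary_def)
  have gram: "mmul (A_theta \<theta>) n U (mstar (A_theta \<theta>) n U) i i (2 * fst M, 2 * snd M) = 0"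
    if "M \<noteq> (0, 0)" "i < n" "\<forall>i<n. \<forall>k<n. \<forall>m\<in>supp2 (U i k). deglex_le m M" for M i
    using that(1) U(2) by (cases M) (auto simp: mid_def A_theta_def)
  show ?thesis
    using supp2_trivial_if_gram_lead_vanishes[OF U(1) gram] by (intro eq_scalar_mat_const_part[OF U(1)])
qed

lemma supp2_scalar_incl: "supp2 (scalar_incl a) = (if a = 0 then {} else {(0, 0)})"
  by (auto simp: supp2_def scalar_incl_def)

lemma scalar_incl_0 [simp]: "scalar_incl 0 = (\<lambda>_. 0)"
  by (simp add: scalar_incl_def fun_eq_iff)

lemma moyal_mul_scalar_incl: "moyal_mul \<theta> (scalar_incl a) (scalar_incl b) = scalar_incl (a * b)"
  unfolding moyal_mul_def supp2_scalar_incl by (auto simp: scalar_incl_def fun_eq_iff)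

lemma moyal_star_scalar_incl: "moyal_star \<theta> (scalar_incl a) = scalar_incl (cnj a)"
  unfolding moyal_star_def supp2_scalar_incl by (auto simp: scalar_incl_def fun_eq_iff)

lemma mmul_scalar_mat: "mmul (A_theta \<theta>) n (scalar_mat p) (scalar_mat q) = scalar_mat (cmat_mult n p q)"
  by (auto intro!: ext simp: mmul_A_theta scalar_mat_def moyal_mul_scalar_incl cmat_mult_def)
    (auto simp: scalar_incl_def)

lemma mstar_scalar_mat: "mstar (A_theta \<theta>) n (scalar_mat p) = scalar_mat (cmat_adj n p)"
  by (intro ext) (simp add: mstar_A_theta scalar_mat_def moyal_star_scalar_incl cmat_adj_def)

lemma mid_A_theta: "mid (A_theta \<theta>) n = scalar_mat (cmat_one n)"
  by (auto intro!: ext simp: mid_def A_theta_def scalar_mat_def cmat_one_def scalar_incl_def)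

lemma mat_in_scalar_mat: "mat_in (A_theta \<theta>) n (scalar_mat p) \<longleftrightarrow> cmat n p"
  by (auto simp: mat_in_A_theta cmat_def scalar_mat_def scalar_incl_def supp2_def fun_eq_iff)

lemma unitary_scalar_mat: "unitary (A_theta \<theta>) n (scalar_mat u) \<longleftrightarrow> cmat_unitary n u"
  by (simp add: unitary_def cmat_unitary_def mat_in_scalar_mat mstar_scalar_mat mmul_scalar_mat
      mid_A_theta scalar_mat_inj)

lemma projector_scalar_mat: "projector (A_theta \<theta>) (n, scalar_mat p) \<longleftrightarrow> cmat_proj n p"
  by (simp add: projector_def cmat_proj_def mat_in_scalar_mat mstar_scalar_mat mmul_scalar_mat
      scalar_mat_inj)

lemma projector_A_theta_iff:
  "projector (A_theta \<theta>) (n, P) \<longleftrightarrow> P = scalar_mat (const_part P) \<and> cmat_proj n (const_part P)"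
  by (metis projector_A_theta_scalar projector_scalar_mat)

lemma dsum_scalar_mat:
  "dsum (A_theta \<theta>) (n, scalar_mat p) (m, scalar_mat q) = (n + m, scalar_mat (cmat_block_diag n m p q))"
  by (auto intro!: ext simp: dsum_def A_theta_def scalar_mat_def cmat_block_diag_def scalar_incl_def)

lemma zero_proj_A_theta: "zero_proj (A_theta \<theta>) = apsnd scalar_mat (zero_proj complex_salg)"
  by (simp add: zero_proj_def A_theta_def sa_zero_complex_salg scalar_mat_def)

lemma proj_equiv_scalar_mat:
  "proj_equiv (A_theta \<theta>) (n, scalar_mat p) (m, scalar_mat q) \<longleftrightarrow> proj_equiv complex_salg (n, p) (m, q)"
proof -
  let ?A = "A_theta \<theta>"
  have "(\<exists>N u. n \<le> N \<and> m \<le> N \<and> unitary ?A N u \<and>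
          scalar_mat p = mmul ?A N (mmul ?A N u (scalar_mat q)) (mstar ?A N u))
     \<longleftrightarrow> (\<exists>N u. n \<le> N \<and> m \<le> N \<and> cmat_unitary N u \<and> p = cmat_conj N u q)"
  proof
    assume "\<exists>N u. n \<le> N \<and> m \<le> N \<and> unitary ?A N u \<and>
          scalar_mat p = mmul ?A N (mmul ?A N u (scalar_mat q)) (mstar ?A N u)"
    then obtain N u where "n \<le> N" "m \<le> N" "unitary ?A N u"
      and "scalar_mat p = mmul ?A N (mmul ?A N u (scalar_mat q)) (mstar ?A N u)"
      by blast
    moreover have "u = scalar_mat (const_part u)"
      using unitary_A_theta_scalar \<open>unitary ?A N u\<close> .
    ultimately show "\<exists>N u. n \<le> N \<and> m \<le> N \<and> cmat_unitary N u \<and> p = cmat_conj N u q"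
      by (metis unitary_scalar_mat mmul_scalar_mat mstar_scalar_mat scalar_mat_inj cmat_conj_def)
  next
    assume "\<exists>N u. n \<le> N \<and> m \<le> N \<and> cmat_unitary N u \<and> p = cmat_conj N u q"
    then show "\<exists>N u. n \<le> N \<and> m \<le> N \<and> unitary ?A N u \<and>
          scalar_mat p = mmul ?A N (mmul ?A N u (scalar_mat q)) (mstar ?A N u)"
      by (metis unitary_scalar_mat mmul_scalar_mat mstar_scalar_mat cmat_conj_def)
  qed
  then show ?thesis
    unfolding proj_equiv_def fst_conv snd_conv projector_scalar_mat projector_complex_salg
      unitary_complex_salg mmul_complex_salg mstar_complex_salg cmat_conj_def[symmetric]
    by (simp only:)
qed

lemma projector_apsnd_scalar_mat:
  "projector (A_theta \<theta>) (apsnd scalar_mat P) \<longleftrightarrow> projector complex_salg P"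
  by (cases P) (simp add: projector_scalar_mat projector_complex_salg)

definition const_rank :: "nat \<times> (nat \<times> nat \<Rightarrow> complex) mat \<Rightarrow> nat" where
  "const_rank P = cmat_rank (fst P) (const_part (snd P))"

lemma const_rank_apsnd_scalar_mat: "const_rank (apsnd scalar_mat P) = case_prod cmat_rank P"
  by (cases P) (simp add: const_rank_def)

lemma proj_equiv_A_theta_iff:
  "proj_equiv (A_theta \<theta>) P Q \<longleftrightarrow>
     projector (A_theta \<theta>) P \<and> projector (A_theta \<theta>) Q \<and> const_rank P = const_rank Q"
proof (cases "projector (A_theta \<theta>) P \<and> projector (A_theta \<theta>) Q")
  case True
  obtain n P' m Q' where PQ: "P = (n, P')" "Q = (m, Q')"
    by (cases P, cases Q)
  then show ?thesis
    using True unfolding PQ projector_A_theta_iff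
    by (metis proj_equiv_complex_iff const_rank_def fst_conv proj_equiv_scalar_mat projector_complex_salg
        snd_conv split_conv)
qed (auto simp: proj_equiv_def)

lemma K0_rank_A_theta: "K0_rank (A_theta \<theta>) const_rank"
proof -
  interpret C: K0_rank complex_salg "case_prod cmat_rank"
    by (rule K0_rank_complex)
  show ?thesis
  proof
    fix P Q :: "nat \<times> (nat \<times> nat \<Rightarrow> complex) mat"
    show "proj_equiv (A_theta \<theta>) P Q \<longleftrightarrow>
        projector (A_theta \<theta>) P \<and> projector (A_theta \<theta>) Q \<and> const_rank P = const_rank Q"
      by (rule proj_equiv_A_theta_iff)
    obtain n P' m Q' where PQ: "P = (n, P')" "Q = (m, Q')"
      by (cases P, cases Q)
    assume "projector (A_theta \<theta>) P" "projector (A_theta \<theta>) Q"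
    then obtain p q where pq: "P = (n, scalar_mat p)" "Q = (m, scalar_mat q)" "cmat_proj n p" "cmat_proj m q"
      unfolding PQ projector_A_theta_iff by blast
    then have "projector complex_salg (n, p)" "projector complex_salg (m, q)"
      by (simp_all add: projector_complex_salg)
    then show "projector (A_theta \<theta>) (dsum (A_theta \<theta>) P Q)"
      and "const_rank (dsum (A_theta \<theta>) P Q) = const_rank P + const_rank Q"
      using C.projector_dsum C.rank_dsum
      by (auto simp: pq dsum_scalar_mat dsum_complex_salg projector_scalar_mat projector_complex_salg
          const_rank_def)
  next
    show "projector (A_theta \<theta>) (zero_proj (A_theta \<theta>))" "const_rank (zero_proj (A_theta \<theta>)) = 0"
      using C.projector_zero_proj C.rank_zero_proj
      by (simp_all add: zero_proj_A_theta projector_apsnd_scalar_mat const_rank_apsnd_scalar_mat)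
  next
    fix r
    obtain P where "projector complex_salg P" "case_prod cmat_rank P = r"
      using C.rank_surj by blast
    then show "\<exists>P. projector (A_theta \<theta>) P \<and> const_rank P = r"
      by (intro exI[of _ "apsnd scalar_mat P"])
        (simp add: projector_apsnd_scalar_mat const_rank_apsnd_scalar_mat)
  qed
qed

lemma K0_map_scalar_incl_class:
  "K0_map (A_theta \<theta>) scalar_incl (K0_rank.K0_class complex_salg (case_prod cmat_rank) k)
    = K0_rank.K0_class (A_theta \<theta>) const_rank k"
proof -
  interpret C: K0_rank complex_salg "case_prod cmat_rank"
    by (rule K0_rank_complex)
  interpret A: K0_rank "A_theta \<theta>" const_rank
    by (rule K0_rank_A_theta)
  have "grel (A_theta \<theta>) `` {(apsnd scalar_mat (fst x), apsnd scalar_mat (snd x))} = A.K0_class k"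
    if "x \<in> C.K0_class k" for x
  proof -
    have "(apsnd scalar_mat (fst x), apsnd scalar_mat (snd x)) \<in> A.K0_class k"
      using that by (simp add: C.K0_class_def A.K0_class_def C.proj_pairs_def A.proj_pairs_def
          C.index_def A.index_def projector_apsnd_scalar_mat const_rank_apsnd_scalar_mat)
    then show ?thesis
      by (auto simp: A.grel_Image A.K0_class_def)
  qed
  then show ?thesis
    using C.K0_class_nonempty[of k] by (auto simp: K0_map_def scalar_mat_def apsnd_def map_prod_def split_beta)
qed

theorem corollary2p4:
  fixes \<theta> :: real
  assumes "\<theta> \<ge> 0"
  shows "group (K0 (A_theta \<theta>))
    \<and> K0_map (A_theta \<theta>) scalar_incl \<in> iso (K0 complex_salg) (K0 (A_theta \<theta>))
    \<and> K0 complex_salg \<cong> integer_group"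
  using K0_rank.group_K0[OF K0_rank_A_theta]
    K0_map_iso[OF K0_rank_complex K0_rank_A_theta K0_map_scalar_incl_class]
    K0_rank.K0_iso_integer_group[OF K0_rank_complex]
  by blast

end
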